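(* Let $1\le\ell\le r$ and $0\le k\le\ell-1$. Every ideal $I$ of $R_\ell$ with $J_{\ell,k+1}(0)\subseteq I\subseteq J_{\ell,k}(0)$ is of the form $$I=J_{\ell,k+1}(0)+(nF_{\ell,k})=(nF_{\ell,k},F_{\ell,k+1},F_{\ell,k+2},\dots,F_{\ell,\ell-1})$$ for some $n\in\mathbb{Z}$.
   Context: Fix a prime $p$ and an integer $r\ge0$. For $0\le k\le r$ let $R_k$ be the commutative ring which is free as a $\mathbb{Z}$-module with basis $X_{k,0},\dots,X_{k,k}$ and multiplication $X_{k,i}X_{k,j}=p^{k-\max(i,j)}X_{k,\min(i,j)}$; thus $X_{k,k}=1$, and an integer $n$ is identified with $nX_{k,k}$. For $0\le i\le\ell\le r$ put $F_{\ell,i}=X_{\ell,i}-p^{\ell-i}\in R_\ell$. For $0\le k\le\ell$ and $x\in\mathbb{Z}$, $J_{\ell,k}(x)\subseteq R_\ell$ is the ideal generated by $x,F_{\ell,k},F_{\ell,k+1},\dots,F_{\ell,\ell-1}$ if $k\le\ell-1$, and $J_{\ell,\ell}(x)=xR_\ell$ (so $J_{\ell,\ell}(0)=0$). *)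

theory Defs
  imports "HOL-Algebra.Ideal" "HOL-Computational_Algebra.Primes"
begin

text \<open>The ring R_l (depending on the prime p): elements are integer coefficient
  vectors f on the basis X_{l,0},...,X_{l,l}, i.e. functions nat => int vanishing above l.
  f i is the coefficient of X_{l,i}.\<close>

definition Rcarrier :: "nat \<Rightarrow> (nat \<Rightarrow> int) set" where
  "Rcarrier l = {f. \<forall>i>l. f i = 0}"

definition Rmult :: "int \<Rightarrow> nat \<Rightarrow> (nat \<Rightarrow> int) \<Rightarrow> (nat \<Rightarrow> int) \<Rightarrow> (nat \<Rightarrow> int)" where
  "Rmult p l f g = (\<lambda>m. if m \<le> l then
      (\<Sum>i\<le>l. \<Sum>j\<le>l. if min i j = m then p ^ (l - max i j) * f i * g j else 0) else 0)"

definition X :: "nat \<Rightarrow> (nat \<Rightarrow> int)" where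
  "X i = (\<lambda>m. if m = i then 1 else 0)"

text \<open>integer n identified with n X_{l,l}\<close>
definition Rint :: "nat \<Rightarrow> int \<Rightarrow> (nat \<Rightarrow> int)" where
  "Rint l n = (\<lambda>m. if m = l then n else 0)"

definition Rring :: "int \<Rightarrow> nat \<Rightarrow> (nat \<Rightarrow> int) ring" where
  "Rring p l = \<lparr>carrier = Rcarrier l, monoid.mult = Rmult p l, one = X l,
     zero = (\<lambda>_. 0), add = (\<lambda>f g m. f m + g m)\<rparr>"

definition F :: "int \<Rightarrow> nat \<Rightarrow> nat \<Rightarrow> (nat \<Rightarrow> int)" where
  "F p l i = (\<lambda>m. X i m - Rint l (p ^ (l - i)) m)"

definition J :: "int \<Rightarrow> nat \<Rightarrow> nat \<Rightarrow> int \<Rightarrow> (nat \<Rightarrow> int) set" where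
  "J p l k x = genideal (Rring p l) (insert (Rint l x) {F p l i | i. k \<le> i \<and> i < l})"

end

theory Submission
  imports Defs "HOL-Computational_Algebra.Group_Closure"
begin

text \<open>
  The augmentation aug f = \<Sum>i\<le>l. p^(l-i) * f i, i.e. X_{l,i} \<mapsto> p^(l-i), is a ring homomorphism
  R_l \<rightarrow> \<int> killing every F_{l,i}. Let A_k consist of the elements of its kernel whose coefficients
  at X_{l,0}, ..., X_{l,k-1} vanish. Subtracting f_j F_{l,j} for j = k, k+1, ..., l-1 in turn clears
  the coefficients of f \<in> A_k one at a time, so A_k \<subseteq> (F_{l,k}, ..., F_{l,l-1}) and J_{l,k}(0) = A_k.
  An ideal I between A_{k+1} and A_k is therefore determined by its group of X_{l,k}-coefficients,
  which is n\<int> for n their gcd: every f \<in> I differs from (f_k/n) n F_{l,k} by an element of A_{k+1}.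
\<close>

lemma Rring_simps [simp]:
  "carrier (Rring p l) = Rcarrier l"
  "x \<otimes>\<^bsub>Rring p l\<^esub> y = Rmult p l x y"
  "x \<oplus>\<^bsub>Rring p l\<^esub> y = (\<lambda>m. x m + y m)"
  "\<zero>\<^bsub>Rring p l\<^esub> = (\<lambda>_. 0)"
  by (simp_all add: Rring_def)

lemma Rint_in_Rcarrier [simp]: "Rint l c \<in> Rcarrier l"
  by (simp add: Rcarrier_def Rint_def)

lemma Rmult_Rint_left:
  assumes "f \<in> Rcarrier l"
  shows "Rmult p l (Rint l c) f = (\<lambda>m. c * f m)"
proof
  fix m
  show "Rmult p l (Rint l c) f m = c * f m"
  proof (cases "m \<le> l")
    case True
    have "(\<Sum>j\<le>l. if min i j = m then p ^ (l - max i j) * Rint l c i * f j else 0)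
        = (if i = l then c * f m else 0)" if "i \<le> l" for i
      using True that by (auto simp: Rint_def min_def max_def if_distrib[of "\<lambda>x. x * _"] cong: if_cong)
    then show ?thesis using True by (simp add: Rmult_def)
  qed (use assms in \<open>simp add: Rmult_def Rcarrier_def\<close>)
qed

lemma Rmult_commute: "Rmult p l f g = Rmult p l g f"
proof
  fix m
  have "(\<Sum>i\<le>l. \<Sum>j\<le>l. if min i j = m then p ^ (l - max i j) * f i * g j else 0)
      = (\<Sum>j\<le>l. \<Sum>i\<le>l. if min j i = m then p ^ (l - max j i) * g j * f i else 0)"
    by (subst sum.swap) (auto simp: max.commute min.commute mult_ac intro!: sum.cong)
  then show "Rmult p l f g m = Rmult p l g f m" by (simp add: Rmult_def)
qed

lemma Rmult_in_Rcarrier [simp]: "Rmult p l f g \<in> Rcarrier l"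
  by (simp add: Rcarrier_def Rmult_def)

lemma F_in_Rcarrier: "i \<le> l \<Longrightarrow> F p l i \<in> Rcarrier l"
  by (simp add: F_def Rcarrier_def X_def Rint_def)

lemma ideal_smult_closed:
  assumes "ideal K (Rring p l)" and "f \<in> K"
  shows "(\<lambda>m. c * f m) \<in> K"
proof -
  interpret ideal K "Rring p l" by fact
  have "f \<in> Rcarrier l" using a_subset assms(2) by auto
  with I_l_closed[OF assms(2), of "Rint l c"] show ?thesis by (simp add: Rmult_Rint_left)
qed

lemma ideal_add_closed:
  assumes "ideal K (Rring p l)" and "f \<in> K" and "g \<in> K"
  shows "(\<lambda>m. f m + g m) \<in> K"
  using additive_subgroup.a_closed[OF ideal.axioms(1)[OF assms(1)] assms(2,3)] by simp

lemma ideal_diff_closed: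
  assumes "ideal K (Rring p l)" and "f \<in> K" and "g \<in> K"
  shows "(\<lambda>m. f m - g m) \<in> K"
  using ideal_add_closed[OF assms(1,2) ideal_smult_closed[OF assms(1,3), of "-1"]] by simp

lemma ideal_zero_closed: "ideal K (Rring p l) \<Longrightarrow> (\<lambda>_. 0) \<in> K"
  using additive_subgroup.zero_closed[OF ideal.axioms(1)] by fastforce

definition aug :: "int \<Rightarrow> nat \<Rightarrow> (nat \<Rightarrow> int) \<Rightarrow> int" where
  "aug p l f = (\<Sum>i\<le>l. p ^ (l - i) * f i)"

lemma aug_Rmult: "aug p l (Rmult p l f g) = aug p l f * aug p l g"
proof -
  have "aug p l (Rmult p l f g) = (\<Sum>m\<le>l. \<Sum>i\<le>l. \<Sum>j\<le>l.
      if min i j = m then p ^ (l - m) * (p ^ (l - max i j) * f i * g j) else 0)"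
    unfolding aug_def Rmult_def
    by (simp add: sum_distrib_left if_distrib cong: if_cong)
  also have "\<dots> = (\<Sum>i\<le>l. \<Sum>j\<le>l. \<Sum>m\<le>l.
      if min i j = m then p ^ (l - m) * (p ^ (l - max i j) * f i * g j) else 0)"
    by (subst sum.swap, rule sum.cong[OF refl], subst sum.swap, rule refl)
  also have "\<dots> = (\<Sum>i\<le>l. \<Sum>j\<le>l. (p ^ (l - i) * f i) * (p ^ (l - j) * g j))"
  proof (intro sum.cong refl)
    fix i j assume "i \<in> {..l}" "j \<in> {..l}"
    then have "(\<Sum>m\<le>l. if min i j = m then p ^ (l - m) * (p ^ (l - max i j) * f i * g j) else 0)
        = p ^ (l - min i j) * (p ^ (l - max i j) * f i * g j)"
      by (simp add: sum.delta)
    also have "\<dots> = (p ^ (l - i) * f i) * (p ^ (l - j) * g j)"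
      by (cases "i \<le> j") (simp_all add: min_def max_def mult_ac)
    finally show "(\<Sum>m\<le>l. if min i j = m then p ^ (l - m) * (p ^ (l - max i j) * f i * g j) else 0)
        = (p ^ (l - i) * f i) * (p ^ (l - j) * g j)" .
  qed
  also have "\<dots> = aug p l f * aug p l g"
    unfolding aug_def by (simp add: sum_product)
  finally show ?thesis .
qed

lemma aug_add: "aug p l (\<lambda>m. f m + g m) = aug p l f + aug p l g"
  by (simp add: aug_def algebra_simps sum.distrib)

lemma aug_smult: "aug p l (\<lambda>m. c * f m) = c * aug p l f"
  by (simp add: aug_def sum_distrib_left mult_ac)

lemma aug_F:
  assumes "i \<le> l"
  shows "aug p l (F p l i) = 0"
proof -
  have X: "(\<lambda>m. p ^ (l - m) * X i m) = (\<lambda>m. if m = i then p ^ (l - i) else 0)"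
    by (auto simp: X_def)
  have Rint: "(\<lambda>m. p ^ (l - m) * Rint l (p ^ (l - i)) m) = (\<lambda>m. if m = l then p ^ (l - i) else 0)"
    by (auto simp: Rint_def)
  show ?thesis
    using assms unfolding aug_def F_def right_diff_distrib sum_subtractf X Rint by simp
qed

definition aug_kernel_from :: "int \<Rightarrow> nat \<Rightarrow> nat \<Rightarrow> (nat \<Rightarrow> int) set" where
  "aug_kernel_from p l k = {f \<in> Rcarrier l. (\<forall>m<k. f m = 0) \<and> aug p l f = 0}"

lemma F_in_aug_kernel_from: "k \<le> i \<Longrightarrow> i < l \<Longrightarrow> F p l i \<in> aug_kernel_from p l k"
  using F_in_Rcarrier[of i l p] aug_F[of i l p]
  by (auto simp: aug_kernel_from_def F_def X_def Rint_def)

lemma Rmult_vanishes_below: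
  assumes f: "f \<in> aug_kernel_from p l k" and "m < k"
  shows "Rmult p l g f m = 0"
proof (cases "m \<le> l")
  case True
  have f_low: "f j = 0" if "j < k" for j
    using f that by (simp add: aug_kernel_from_def)
  have summand: "(if min i j = m then p ^ (l - max i j) * g i * f j else 0)
      = (if i = m then g m * (p ^ (l - j) * f j) else 0)" for i j
    using \<open>m < k\<close> f_low[of j] by (cases "j < k") (auto simp: min_def max_def)
  have "Rmult p l g f m = g m * aug p l f"
    using True by (simp add: Rmult_def summand aug_def sum_distrib_left sum.swap[of _ "{..l}"])
  then show ?thesis using f by (simp add: aug_kernel_from_def)
qed (simp add: Rmult_def)

lemma aug_kernel_from_ideal:
  assumes "ring (Rring p l)"
  shows "ideal (aug_kernel_from p l k) (Rring p l)"
proof -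
  interpret R: ring "Rring p l" by fact
  have R_minus: "\<ominus>\<^bsub>Rring p l\<^esub> f = (\<lambda>m. - f m)" if "f \<in> Rcarrier l" for f
    by (rule R.minus_equality) (use that in \<open>auto simp: Rcarrier_def\<close>)
  have Rmult_closed: "Rmult p l g f \<in> aug_kernel_from p l k" if "f \<in> aug_kernel_from p l k" for f g
    using that Rmult_vanishes_below[OF that] by (simp add: aug_kernel_from_def aug_Rmult)
  show ?thesis
  proof (rule idealI[OF assms R.add.subgroupI])
    show "aug_kernel_from p l k \<subseteq> carrier (Rring p l)"
      by (auto simp: aug_kernel_from_def)
    show "aug_kernel_from p l k \<noteq> {}"
      by (auto simp: aug_kernel_from_def Rcarrier_def aug_def intro!: exI[of _ "\<lambda>_. 0"])
  next
    fix f assume "f \<in> aug_kernel_from p l k"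
    then show "\<ominus>\<^bsub>Rring p l\<^esub> f \<in> aug_kernel_from p l k"
      using R_minus aug_smult[of p l "-1" f] by (auto simp: aug_kernel_from_def Rcarrier_def)
  next
    fix f g assume "f \<in> aug_kernel_from p l k" "g \<in> aug_kernel_from p l k"
    then show "f \<oplus>\<^bsub>Rring p l\<^esub> g \<in> aug_kernel_from p l k"
      using aug_add[of p l f g] by (auto simp: aug_kernel_from_def Rcarrier_def)
  next
    fix f g assume "f \<in> aug_kernel_from p l k" "g \<in> carrier (Rring p l)"
    then show "g \<otimes>\<^bsub>Rring p l\<^esub> f \<in> aug_kernel_from p l k"
      and "f \<otimes>\<^bsub>Rring p l\<^esub> g \<in> aug_kernel_from p l k"
      using Rmult_closed by (simp_all add: Rmult_commute[of p l f])
  qed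
qed

lemma aug_kernel_from_elim_step:
  assumes f: "f \<in> aug_kernel_from p l j" and "j < l"
  shows "(\<lambda>m. f m - f j * F p l j m) \<in> aug_kernel_from p l (Suc j)"
proof -
  have "f \<in> Rcarrier l" "\<forall>m<j. f m = 0" "aug p l f = 0"
    using f by (auto simp: aug_kernel_from_def)
  moreover have "aug p l (\<lambda>m. f m - f j * F p l j m) = aug p l f - f j * aug p l (F p l j)"
    using aug_add[of p l f "\<lambda>m. - (f j * F p l j m)"] aug_smult[of p l "- f j" "F p l j"] by simp
  ultimately show ?thesis
    using \<open>j < l\<close> aug_F[of j l p]
    by (auto simp: aug_kernel_from_def Rcarrier_def less_Suc_eq F_def X_def Rint_def)
qed

lemma aug_kernel_from_top:
  assumes "f \<in> aug_kernel_from p l l"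
  shows "f = (\<lambda>_. 0)"
proof -
  have low: "\<forall>m<l. f m = 0" and high: "\<forall>m>l. f m = 0" and "aug p l f = 0"
    using assms by (auto simp: aug_kernel_from_def Rcarrier_def)
  moreover have "aug p l f = f l"
    using low by (simp add: aug_def lessThan_Suc_atMost[symmetric])
  ultimately show ?thesis
    using high by (auto simp: fun_eq_iff) (metis linorder_neqE_nat)
qed

lemma aug_kernel_from_subset_ideal:
  assumes K: "ideal K (Rring p l)" and "k \<le> l"
    and F_in_K: "\<And>i. k \<le> i \<Longrightarrow> i < l \<Longrightarrow> F p l i \<in> K"
  shows "aug_kernel_from p l k \<subseteq> K"
  using \<open>k \<le> l\<close>
proof (induction rule: inc_induct)
  case base
  show ?case using aug_kernel_from_top ideal_zero_closed[OF K] by blast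
next
  case (step j)
  show ?case
  proof
    fix f assume "f \<in> aug_kernel_from p l j"
    then have "(\<lambda>m. f m - f j * F p l j m) \<in> K"
      using aug_kernel_from_elim_step step by blast
    moreover have "(\<lambda>m. f j * F p l j m) \<in> K"
      using ideal_smult_closed[OF K F_in_K] step by blast
    ultimately show "f \<in> K"
      using ideal_add_closed[OF K] by fastforce
  qed
qed

lemma J_generators_in_carrier:
  "insert (Rint l x) {F p l i | i. k \<le> i \<and> i < l} \<subseteq> carrier (Rring p l)"
  using F_in_Rcarrier by force

lemma J_zero_eq_aug_kernel_from:
  assumes R: "ring (Rring p l)" and "k \<le> l"
  shows "J p l k 0 = aug_kernel_from p l k"
proof
  interpret ring "Rring p l" by (fact R)
  show "J p l k 0 \<subseteq> aug_kernel_from p l k"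
    unfolding J_def
  proof (rule genideal_minimal[OF aug_kernel_from_ideal[OF R]])
    have "Rint l 0 = (\<lambda>_. 0)" by (simp add: Rint_def fun_eq_iff)
    then show "insert (Rint l 0) {F p l i | i. k \<le> i \<and> i < l} \<subseteq> aug_kernel_from p l k"
      using ideal_zero_closed[OF aug_kernel_from_ideal[OF R]] F_in_aug_kernel_from by auto
  qed
  have "ideal (J p l k 0) (Rring p l)"
    unfolding J_def by (rule genideal_ideal[OF J_generators_in_carrier])
  moreover have "F p l i \<in> J p l k 0" if "k \<le> i" "i < l" for i
    using genideal_self[OF J_generators_in_carrier] that unfolding J_def by blast
  ultimately show "aug_kernel_from p l k \<subseteq> J p l k 0"
    using aug_kernel_from_subset_ideal \<open>k \<le> l\<close> by blast
qed

lemma Gcd_mem_if_closed_under_diff: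
  fixes S :: "int set"
  assumes "0 \<in> S" and "\<And>a b. a \<in> S \<Longrightarrow> b \<in> S \<Longrightarrow> a - b \<in> S"
  shows "Gcd S \<in> S"
proof -
  have "s \<in> S" if "s \<in> group_closure S" for s
    using that by induction (use assms in auto)
  then show ?thesis using Gcd_in_group_closure by blast
qed

lemma ideal_between_aug_kernels:
  assumes I: "ideal I (Rring p l)" and "k < l"
    and lower: "aug_kernel_from p l (Suc k) \<subseteq> I" and upper: "I \<subseteq> aug_kernel_from p l k"
  defines "n \<equiv> Gcd ((\<lambda>f. f k) ` I)"
  shows "I = genideal (Rring p l) (insert (\<lambda>m. n * F p l k m) {F p l i | i. Suc k \<le> i \<and> i < l})"
    (is "I = genideal _ ?gens")
proof -
  interpret I: ideal I "Rring p l" by fact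
  have reduce: "(\<lambda>m. f m - f k * F p l k m) \<in> aug_kernel_from p l (Suc k)" if "f \<in> I" for f
    using aug_kernel_from_elim_step upper that \<open>k < l\<close> by blast
  have "n \<in> (\<lambda>f. f k) ` I"
    unfolding n_def
  proof (rule Gcd_mem_if_closed_under_diff)
    show "0 \<in> (\<lambda>f. f k) ` I" using ideal_zero_closed[OF I] by force
    fix a b assume "a \<in> (\<lambda>f. f k) ` I" "b \<in> (\<lambda>f. f k) ` I"
    then show "a - b \<in> (\<lambda>f. f k) ` I" using ideal_diff_closed[OF I] by force
  qed
  then obtain f0 where "f0 \<in> I" "f0 k = n" by blast
  then have nF_in_I: "(\<lambda>m. n * F p l k m) \<in> I"
    using ideal_diff_closed[OF I \<open>f0 \<in> I\<close>, of "\<lambda>m. f0 m - f0 k * F p l k m"] reduce lower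
    by auto
  have gens: "?gens \<subseteq> carrier (Rring p l)"
    using F_in_Rcarrier \<open>k < l\<close> by (force simp: Rcarrier_def)
  show ?thesis
  proof
    show "genideal (Rring p l) ?gens \<subseteq> I"
    proof (rule I.genideal_minimal[OF I])
      have "{F p l i | i. Suc k \<le> i \<and> i < l} \<subseteq> I"
        using F_in_aug_kernel_from lower by blast
      then show "?gens \<subseteq> I" using nF_in_I by blast
    qed
  next
    define K where "K = genideal (Rring p l) ?gens"
    have K: "ideal K (Rring p l)"
      unfolding K_def by (rule I.genideal_ideal[OF gens])
    have gens_in_K: "?gens \<subseteq> K"
      unfolding K_def by (rule I.genideal_self[OF gens])
    show "I \<subseteq> K"
    proof
      fix f assume "f \<in> I"
      then have "n dvd f k" unfolding n_def by (simp add: Gcd_dvd)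
      then obtain c where c: "f k = n * c" by blast
      have "aug_kernel_from p l (Suc k) \<subseteq> K"
        by (rule aug_kernel_from_subset_ideal[OF K Suc_leI[OF \<open>k < l\<close>]]) (use gens_in_K in blast)
      then have "(\<lambda>m. f m - f k * F p l k m) \<in> K"
        using reduce[OF \<open>f \<in> I\<close>] by blast
      moreover have "(\<lambda>m. c * (n * F p l k m)) \<in> K"
        using ideal_smult_closed[OF K] gens_in_K by blast
      ultimately have "(\<lambda>m. (f m - f k * F p l k m) + c * (n * F p l k m)) \<in> K"
        using ideal_add_closed[OF K] by blast
      then show "f \<in> K" by (simp add: c algebra_simps)
    qed
  qed
qed

theorem lemma6:
  fixes p :: int and r l k :: nat and I :: "(nat \<Rightarrow> int) set"
  assumes "prime p" and "1 \<le> l" and "l \<le> r" and "k \<le> l - 1"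
    and "ideal I (Rring p l)"
    and "J p l (k + 1) 0 \<subseteq> I" and "I \<subseteq> J p l k 0"
  shows "\<exists>n::int. I = genideal (Rring p l)
            (insert (Rmult p l (Rint l n) (F p l k)) {F p l i | i. k + 1 \<le> i \<and> i < l})"
proof -
  have R: "ring (Rring p l)" using assms(5) by (rule ideal.axioms(2))
  have "k < l" using assms(2,4) by linarith
  then have "aug_kernel_from p l (Suc k) \<subseteq> I" and "I \<subseteq> aug_kernel_from p l k"
    using assms(6,7) J_zero_eq_aug_kernel_from[OF R] by simp_all
  from ideal_between_aug_kernels[OF assms(5) \<open>k < l\<close> this]
  obtain n where "I = genideal (Rring p l) (insert (\<lambda>m. n * F p l k m) {F p l i | i. Suc k \<le> i \<and> i < l})"
    by blast
  moreover have "Rmult p l (Rint l n) (F p l k) = (\<lambda>m. n * F p l k m)"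
    using Rmult_Rint_left F_in_Rcarrier \<open>k < l\<close> by simp
  ultimately show ?thesis by (intro exI[of _ n]) simp
qed

end
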